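(* Let $G$ be a nonabelian group, let $\psi\in\operatorname{End}(G)$ satisfy $\psi([G,G])\le Z(G)$, and let $\alpha\in\mathscr{E}$. Writing $\psi_\alpha=\psi\circ\alpha$, define a binary operation on $G$ by $g\circ_\alpha h=g\,\psi_\alpha(g)\,h\,\psi_\alpha(g)^{-1}$. Then $(G,\circ_\alpha)$ is a group.
   Context: $Z(G)$ is the center and $[G,G]$ the commutator subgroup of $G$. $\mathscr{E}$ denotes the set of formal expressions $\alpha=n_1\phi_1+\cdots+n_t\phi_t$ with $t\ge0$, $n_i\in\mathbb Z$, $\phi_i\in\operatorname{End}(G)$ (the free group on $\operatorname{End}(G)$, written additively), acting on $G$ by $\alpha(g)=\phi_1(g^{n_1})\phi_2(g^{n_2})\cdots\phi_t(g^{n_t})$. *)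

theory Defs
  imports "HOL-Algebra.Algebra"
begin

definition group_center :: "('a, 'b) monoid_scheme \<Rightarrow> 'a set" where
  "group_center G = {z \<in> carrier G. \<forall>g \<in> carrier G. z \<otimes>\<^bsub>G\<^esub> g = g \<otimes>\<^bsub>G\<^esub> z}"

abbreviation commutator_subgroup :: "('a, 'b) monoid_scheme \<Rightarrow> 'a set" where
  "commutator_subgroup G \<equiv> derived G (carrier G)"

text \<open>A formal expression n_1 phi_1 + ... + n_t phi_t is represented by the list
  [(n_1, phi_1), ..., (n_t, phi_t)]; it is an element of the set E when every phi_i
  is an endomorphism of G.\<close>
definition formal_exprs :: "('a, 'b) monoid_scheme \<Rightarrow> (int \<times> ('a \<Rightarrow> 'a)) list set" where
  "formal_exprs G = {xs. \<forall>(n, \<phi>) \<in> set xs. \<phi> \<in> hom G G}"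

fun expr_apply :: "('a, 'b) monoid_scheme \<Rightarrow> (int \<times> ('a \<Rightarrow> 'a)) list \<Rightarrow> 'a \<Rightarrow> 'a" where
  "expr_apply G [] g = \<one>\<^bsub>G\<^esub>"
| "expr_apply G ((n, \<phi>) # xs) g = \<phi> (g [^]\<^bsub>G\<^esub> n) \<otimes>\<^bsub>G\<^esub> expr_apply G xs g"

definition circ_op :: "('a, 'b) monoid_scheme \<Rightarrow> ('a \<Rightarrow> 'a) \<Rightarrow> (int \<times> ('a \<Rightarrow> 'a)) list \<Rightarrow> 'a \<Rightarrow> 'a \<Rightarrow> 'a" where
  "circ_op G \<psi> \<alpha> g h =
     g \<otimes>\<^bsub>G\<^esub> \<psi> (expr_apply G \<alpha> g) \<otimes>\<^bsub>G\<^esub> h \<otimes>\<^bsub>G\<^esub> inv\<^bsub>G\<^esub> (\<psi> (expr_apply G \<alpha> g))"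

end

theory Submission
  imports Defs
begin

(* Write f = psi o alpha and Z = Z(G). Since psi maps commutators into Z, the map
   g |-> psi(g) Z into G/Z has abelian image; hence so does each g |-> psi(phi_i(g^n_i)) Z,
   and g |-> f(g) Z is a homomorphism to an abelian subgroup of G/Z. In particular it
   kills conjugates, so f(g o h) = z f(g) f(h) with z central. Conjugation by z f(g) f(h)
   equals conjugation by f(g) f(h), which makes both (g o h) o k and g o (h o k) equal to
   g f(g) h f(h) k f(h)^-1 f(g)^-1. The identity is 1, and f(g)^-1 g^-1 f(g) is a right
   inverse of g. *)

lemma group_center_closed:
  fixes G (structure)
  shows "z \<in> group_center G \<Longrightarrow> z \<in> carrier G"
  unfolding group_center_def by blast

lemma group_centerD:
  fixes G (structure)
  shows "z \<in> group_center G \<Longrightarrow> x \<in> carrier G \<Longrightarrow> z \<otimes> x = x \<otimes> z"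
  unfolding group_center_def by blast

lemma group_centerI:
  fixes G (structure)
  assumes "z \<in> carrier G" "\<And>x. x \<in> carrier G \<Longrightarrow> z \<otimes> x = x \<otimes> z"
  shows "z \<in> group_center G"
  using assms unfolding group_center_def by blast

lemma group_center_subgroup:
  fixes G (structure)
  assumes "group G"
  shows "subgroup (group_center G) G"
proof -
  interpret group G by fact
  show ?thesis
  proof (rule subgroupI)
    show "group_center G \<subseteq> carrier G" by (blast intro: group_center_closed)
    have "\<one> \<in> group_center G" by (rule group_centerI) simp_all
    then show "group_center G \<noteq> {}" by blast
  next
    fix a assume a: "a \<in> group_center G"
    have ac: "a \<in> carrier G" using group_center_closed[OF a] .
    have "inv a \<otimes> g = g \<otimes> inv a" if g: "g \<in> carrier G" for g
    proof -
      have "inv a \<otimes> g = inv a \<otimes> (g \<otimes> a) \<otimes> inv a" using ac g by (simp add: m_assoc)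
      also have "\<dots> = inv a \<otimes> (a \<otimes> g) \<otimes> inv a" using group_centerD[OF a g] by simp
      also have "\<dots> = g \<otimes> inv a" using ac g by (simp flip: m_assoc)
      finally show ?thesis .
    qed
    then show "inv a \<in> group_center G" using ac by (intro group_centerI) auto
  next
    fix a b assume a: "a \<in> group_center G" and b: "b \<in> group_center G"
    have ac: "a \<in> carrier G" and bc: "b \<in> carrier G"
      using group_center_closed[OF a] group_center_closed[OF b] .
    have "a \<otimes> b \<otimes> g = g \<otimes> (a \<otimes> b)" if g: "g \<in> carrier G" for g
    proof -
      have "a \<otimes> b \<otimes> g = a \<otimes> g \<otimes> b" using group_centerD[OF b g] ac bc g by (simp add: m_assoc)
      also have "\<dots> = g \<otimes> (a \<otimes> b)" using group_centerD[OF a g] ac bc g by (simp add: m_assoc)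
      finally show ?thesis .
    qed
    then show "a \<otimes> b \<in> group_center G" using ac bc by (intro group_centerI) auto
  qed
qed

lemma group_center_normal:
  fixes G (structure)
  assumes "group G"
  shows "group_center G \<lhd> G"
proof -
  interpret group G by fact
  show ?thesis
  proof (rule normalI[OF group_center_subgroup[OF assms]], intro ballI)
    fix x assume x: "x \<in> carrier G"
    show "group_center G #> x = x <# group_center G"
      unfolding r_coset_def l_coset_def using group_centerD[OF _ x] by auto
  qed
qed

lemma conj_mult_center:
  fixes G (structure)
  assumes "group G" "z \<in> group_center G"
    and "x \<in> carrier G" "p \<in> carrier G" "k \<in> carrier G"
  shows "x \<otimes> (z \<otimes> p) \<otimes> k \<otimes> inv (z \<otimes> p) = x \<otimes> p \<otimes> k \<otimes> inv p"
proof -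
  interpret group G by fact
  have z: "z \<in> carrier G" using group_center_closed[OF assms(2)] .
  have "x \<otimes> (z \<otimes> p) \<otimes> k \<otimes> inv (z \<otimes> p) = x \<otimes> (z \<otimes> (p \<otimes> k \<otimes> inv p) \<otimes> inv z)"
    using assms z by (simp add: inv_mult_group m_assoc)
  also have "\<dots> = x \<otimes> p \<otimes> k \<otimes> inv p"
    using group_centerD[OF assms(2), of "p \<otimes> k \<otimes> inv p"] assms z by (simp add: m_assoc)
  finally show ?thesis .
qed

lemma (in monoid) group_r_invI:
  assumes r_inv_ex: "\<And>x. x \<in> carrier G \<Longrightarrow> \<exists>y \<in> carrier G. x \<otimes> y = \<one>"
  shows "group G"
proof (rule group_l_invI)
  fix x assume x: "x \<in> carrier G"
  obtain y where y: "y \<in> carrier G" "x \<otimes> y = \<one>" using r_inv_ex[OF x] by blast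
  obtain z where z: "z \<in> carrier G" "y \<otimes> z = \<one>" using r_inv_ex[OF y(1)] by blast
  have "x = x \<otimes> (y \<otimes> z)" using x z by simp
  also have "\<dots> = z" using x y z(1) by (simp flip: m_assoc)
  finally show "\<exists>y \<in> carrier G. y \<otimes> x = \<one>" using y z by blast
qed

lemma hom_pointwise_mult:
  fixes G (structure)
  assumes "group Q" "A \<in> hom G Q" "B \<in> hom G Q"
    and "\<And>x y. x \<in> carrier G \<Longrightarrow> y \<in> carrier G \<Longrightarrow> A x \<otimes>\<^bsub>Q\<^esub> B y = B y \<otimes>\<^bsub>Q\<^esub> A x"
  shows "(\<lambda>x. A x \<otimes>\<^bsub>Q\<^esub> B x) \<in> hom G Q"
proof -
  interpret Q: group Q by fact
  have "A (x \<otimes> y) \<otimes>\<^bsub>Q\<^esub> B (x \<otimes> y) = (A x \<otimes>\<^bsub>Q\<^esub> B x) \<otimes>\<^bsub>Q\<^esub> (A y \<otimes>\<^bsub>Q\<^esub> B y)"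
    if "x \<in> carrier G" "y \<in> carrier G" for x y
  proof -
    have "A (x \<otimes> y) \<otimes>\<^bsub>Q\<^esub> B (x \<otimes> y) = A x \<otimes>\<^bsub>Q\<^esub> (A y \<otimes>\<^bsub>Q\<^esub> B x) \<otimes>\<^bsub>Q\<^esub> B y"
      using that assms(2,3) by (simp add: hom_mult hom_in_carrier Q.m_assoc)
    also have "\<dots> = (A x \<otimes>\<^bsub>Q\<^esub> B x) \<otimes>\<^bsub>Q\<^esub> (A y \<otimes>\<^bsub>Q\<^esub> B y)"
      using that assms(2,3) assms(4)[of y x] by (simp add: hom_in_carrier Q.m_assoc)
    finally show ?thesis .
  qed
  then show ?thesis
    using assms(2,3) by (auto intro!: homI simp: hom_in_carrier)
qed

lemma hom_pointwise_int_pow: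
  fixes G (structure)
  assumes "group Q" "A \<in> hom G Q"
    and "\<And>x y. x \<in> carrier G \<Longrightarrow> y \<in> carrier G \<Longrightarrow> A x \<otimes>\<^bsub>Q\<^esub> A y = A y \<otimes>\<^bsub>Q\<^esub> A x"
  shows "(\<lambda>x. A x [^]\<^bsub>Q\<^esub> (n::int)) \<in> hom G Q"
proof -
  interpret Q: group Q by fact
  have "A (x \<otimes> y) [^]\<^bsub>Q\<^esub> n = A x [^]\<^bsub>Q\<^esub> n \<otimes>\<^bsub>Q\<^esub> A y [^]\<^bsub>Q\<^esub> n"
    if "x \<in> carrier G" "y \<in> carrier G" for x y
    using that assms(2)
    by (simp add: hom_mult hom_in_carrier Q.int_pow_mult_distrib[OF assms(3)[OF that]])
  then show ?thesis
    using assms(2) by (auto intro!: homI simp: hom_in_carrier)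
qed

lemma hom_conj_eq_of_commuting_image:
  fixes G (structure)
  assumes "group G" "group Q" "A \<in> hom G Q"
    and "\<And>x y. x \<in> carrier G \<Longrightarrow> y \<in> carrier G \<Longrightarrow> A x \<otimes>\<^bsub>Q\<^esub> A y = A y \<otimes>\<^bsub>Q\<^esub> A x"
    and "g \<in> carrier G" "p \<in> carrier G" "h \<in> carrier G"
  shows "A (g \<otimes> p \<otimes> h \<otimes> inv p) = A g \<otimes>\<^bsub>Q\<^esub> A h"
proof -
  interpret G: group G by fact
  interpret Q: group Q by fact
  have Ac: "\<And>x. x \<in> carrier G \<Longrightarrow> A x \<in> carrier Q" using assms(3) by (rule hom_in_carrier)
  have "A (g \<otimes> p \<otimes> h \<otimes> inv p) = A g \<otimes>\<^bsub>Q\<^esub> (A p \<otimes>\<^bsub>Q\<^esub> A h) \<otimes>\<^bsub>Q\<^esub> A (inv p)"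
    using assms(3,5-7) by (simp add: hom_mult hom_in_carrier Q.m_assoc)
  also have "\<dots> = A g \<otimes>\<^bsub>Q\<^esub> A h \<otimes>\<^bsub>Q\<^esub> (A p \<otimes>\<^bsub>Q\<^esub> A (inv p))"
    using assms(5-7) assms(4)[of p h] Ac by (simp add: Q.m_assoc)
  also have "\<dots> = A g \<otimes>\<^bsub>Q\<^esub> A h"
    using hom_mult[OF assms(3), of p "inv p", symmetric] hom_one[OF assms(3,1,2)] assms(5-7) Ac
    by simp
  finally show ?thesis .
qed

lemma hom_rcos_commute:
  fixes G (structure)
  assumes "group G" "N \<lhd> H" "\<psi> \<in> hom G H" "\<psi> ` derived G (carrier G) \<subseteq> N"
    and x: "x \<in> carrier G" and y: "y \<in> carrier G"
  shows "(N #>\<^bsub>H\<^esub> \<psi> x) \<otimes>\<^bsub>H Mod N\<^esub> (N #>\<^bsub>H\<^esub> \<psi> y) = (N #>\<^bsub>H\<^esub> \<psi> y) \<otimes>\<^bsub>H Mod N\<^esub> (N #>\<^bsub>H\<^esub> \<psi> x)"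
proof -
  interpret G: group G by fact
  interpret N: normal N H by fact
  interpret \<psi>: group_hom G H \<psi>
    using assms(1,3) N.is_group by (simp add: group_hom_def group_hom_axioms_def)
  have "x \<otimes> y \<otimes> inv x \<otimes> inv y \<in> derived G (carrier G)"
    unfolding derived_def by (rule generate.incl) (use x y in blast)
  then have "\<psi> (x \<otimes> y \<otimes> inv x \<otimes> inv y) \<in> N" using assms(4) by blast
  moreover have "x \<otimes> y \<otimes> inv x \<otimes> inv y = (x \<otimes> y) \<otimes> inv (y \<otimes> x)"
    using x y by (simp add: G.inv_mult_group G.m_assoc)
  ultimately have "\<psi> (x \<otimes> y) \<otimes>\<^bsub>H\<^esub> inv\<^bsub>H\<^esub> \<psi> (y \<otimes> x) \<in> N"
    using x y by simp
  then have "\<psi> (x \<otimes> y) \<in> N #>\<^bsub>H\<^esub> \<psi> (y \<otimes> x)"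
    using x y by (intro N.rcos_module_rev N.is_group) simp_all
  then have "N #>\<^bsub>H\<^esub> \<psi> (y \<otimes> x) = N #>\<^bsub>H\<^esub> \<psi> (x \<otimes> y)"
    using x y by (intro N.repr_independence N.subgroup_axioms) simp_all
  then show ?thesis
    using x y by (simp add: FactGroup_def N.rcos_sum)
qed

lemma formal_exprs_Cons [simp]:
  "(n, \<phi>) # xs \<in> formal_exprs G \<longleftrightarrow> \<phi> \<in> hom G G \<and> xs \<in> formal_exprs G"
  by (auto simp: formal_exprs_def)

lemma expr_apply_closed:
  fixes G (structure)
  assumes "group G" "\<alpha> \<in> formal_exprs G" "g \<in> carrier G"
  shows "expr_apply G \<alpha> g \<in> carrier G"
proof -
  interpret group G by fact
  show ?thesis
    using assms(2)
  proof (induction \<alpha>)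
    case Nil
    then show ?case by simp
  next
    case (Cons a xs)
    obtain n \<phi> where a: "a = (n, \<phi>)" by fastforce
    with Cons have "\<phi> \<in> hom G G" "xs \<in> formal_exprs G" by simp_all
    with Cons.IH a assms(3) show ?case by (simp add: hom_in_carrier)
  qed
qed

lemma expr_apply_one:
  fixes G (structure)
  assumes "group G" "\<alpha> \<in> formal_exprs G"
  shows "expr_apply G \<alpha> \<one> = \<one>"
proof -
  interpret group G by fact
  show ?thesis
    using assms(2)
  proof (induction \<alpha>)
    case Nil
    then show ?case by simp
  next
    case (Cons a xs)
    obtain n \<phi> where a: "a = (n, \<phi>)" by fastforce
    with Cons have "\<phi> \<in> hom G G" "xs \<in> formal_exprs G" by simp_all
    with Cons.IH a assms(1) show ?case by (simp add: hom_one)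
  qed
qed

lemma hom_expr_apply:
  fixes G (structure)
  assumes "group G" "group Q" "F \<in> hom G Q"
    and "\<And>x y. x \<in> carrier G \<Longrightarrow> y \<in> carrier G \<Longrightarrow> F x \<otimes>\<^bsub>Q\<^esub> F y = F y \<otimes>\<^bsub>Q\<^esub> F x"
    and "\<alpha> \<in> formal_exprs G"
  shows "(\<lambda>x. F (expr_apply G \<alpha> x)) \<in> hom G Q"
  using assms(5)
proof (induction \<alpha>)
  case Nil
  have "F \<one> = \<one>\<^bsub>Q\<^esub>" using assms(3,1,2) by (rule hom_one)
  then show ?case
    using assms(2) by (intro homI) (simp_all add: group.is_monoid)
next
  case (Cons a xs)
  interpret G: group G by fact
  interpret Q: group Q by fact
  obtain n \<phi> where a: "a = (n, \<phi>)" by fastforce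
  have \<phi>: "\<phi> \<in> hom G G" and xs: "xs \<in> formal_exprs G" using Cons.prems a by auto
  have F\<phi>: "F \<circ> \<phi> \<in> hom G Q" using \<phi> assms(3) by (rule hom_compose)
  have F\<phi>_pow: "F (\<phi> (x [^] n)) = F (\<phi> x) [^]\<^bsub>Q\<^esub> n" if "x \<in> carrier G" for x
    using hom_int_pow[OF F\<phi> that assms(1,2)] by simp
  have "(\<lambda>x. F (\<phi> x) [^]\<^bsub>Q\<^esub> n) \<in> hom G Q"
    using hom_pointwise_int_pow[OF assms(2) F\<phi>] assms(4) \<phi> by (simp add: hom_in_carrier)
  moreover have "F (\<phi> x) [^]\<^bsub>Q\<^esub> n \<otimes>\<^bsub>Q\<^esub> F (expr_apply G xs y)
                   = F (expr_apply G xs y) \<otimes>\<^bsub>Q\<^esub> F (\<phi> x) [^]\<^bsub>Q\<^esub> n"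
    if "x \<in> carrier G" "y \<in> carrier G" for x y
    using assms(4)[of "\<phi> (x [^] n)" "expr_apply G xs y"] F\<phi>_pow[OF that(1)] \<phi> that
      expr_apply_closed[OF assms(1) xs]
    by (simp add: hom_in_carrier)
  ultimately have "(\<lambda>x. F (\<phi> x) [^]\<^bsub>Q\<^esub> n \<otimes>\<^bsub>Q\<^esub> F (expr_apply G xs x)) \<in> hom G Q"
    using Cons.IH[OF xs] by (intro hom_pointwise_mult[OF assms(2)])
  then show ?case
  proof (rule G.hom_restrict)
    fix x assume x: "x \<in> carrier G"
    have "F (expr_apply G (a # xs) x) = F (\<phi> (x [^] n) \<otimes> expr_apply G xs x)"
      by (simp add: a)
    also have "\<dots> = F (\<phi> (x [^] n)) \<otimes>\<^bsub>Q\<^esub> F (expr_apply G xs x)"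
      using \<phi> x expr_apply_closed[OF assms(1) xs x]
      by (intro hom_mult[OF assms(3)]) (auto intro: hom_in_carrier)
    finally show "F (\<phi> x) [^]\<^bsub>Q\<^esub> n \<otimes>\<^bsub>Q\<^esub> F (expr_apply G xs x) = F (expr_apply G (a # xs) x)"
      using F\<phi>_pow[OF x] by simp
  qed
qed

lemma hom_expr_apply_conj_mod_center:
  fixes G (structure)
  assumes "group G" "\<psi> \<in> hom G G" "\<psi> ` derived G (carrier G) \<subseteq> group_center G"
    and "\<alpha> \<in> formal_exprs G" "g \<in> carrier G" "p \<in> carrier G" "h \<in> carrier G"
  shows "\<psi> (expr_apply G \<alpha> (g \<otimes> p \<otimes> h \<otimes> inv p))
           \<in> group_center G #> (\<psi> (expr_apply G \<alpha> g) \<otimes> \<psi> (expr_apply G \<alpha> h))"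
proof -
  interpret group G by fact
  let ?Z = "group_center G"
  interpret Z: normal ?Z G using group_center_normal[OF assms(1)] .
  let ?Q = "G Mod ?Z"
  have Q: "group ?Q" by (rule Z.factorgroup_is_group)
  define F where "F = (\<lambda>x. ?Z #> \<psi> x)"
  have F: "F \<in> hom G ?Q"
    using Group.hom_compose[OF assms(2) Z.r_coset_hom_Mod] by (simp add: F_def comp_def)
  have F_commute: "F x \<otimes>\<^bsub>?Q\<^esub> F y = F y \<otimes>\<^bsub>?Q\<^esub> F x" if "x \<in> carrier G" "y \<in> carrier G" for x y
    unfolding F_def using hom_rcos_commute[OF assms(1) Z.normal_axioms assms(2,3) that] .
  define A where "A = (\<lambda>x. F (expr_apply G \<alpha> x))"
  have A: "A \<in> hom G ?Q"
    unfolding A_def using hom_expr_apply[OF assms(1) Q F F_commute assms(4)] .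
  have A_commute: "A x \<otimes>\<^bsub>?Q\<^esub> A y = A y \<otimes>\<^bsub>?Q\<^esub> A x" if "x \<in> carrier G" "y \<in> carrier G" for x y
    unfolding A_def using F_commute expr_apply_closed[OF assms(1,4)] that by simp
  have "A (g \<otimes> p \<otimes> h \<otimes> inv p) = A g \<otimes>\<^bsub>?Q\<^esub> A h"
    using hom_conj_eq_of_commuting_image[OF assms(1) Q A A_commute assms(5-7)] .
  moreover have closed: "\<psi> (expr_apply G \<alpha> x) \<in> carrier G" if "x \<in> carrier G" for x
    using that by (intro hom_in_carrier[OF assms(2)] expr_apply_closed[OF assms(1,4)])
  ultimately have "?Z #> \<psi> (expr_apply G \<alpha> (g \<otimes> p \<otimes> h \<otimes> inv p))
               = ?Z #> (\<psi> (expr_apply G \<alpha> g) \<otimes> \<psi> (expr_apply G \<alpha> h))"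
    using assms(5-7) by (simp add: A_def F_def FactGroup_def Z.rcos_sum)
  moreover have "g \<otimes> p \<otimes> h \<otimes> inv p \<in> carrier G" using assms(5-7) by simp
  ultimately show ?thesis
    using rcos_self[OF closed Z.subgroup_axioms] by metis
qed

lemma twisted_mult_group:
  fixes G (structure) and f :: "'a \<Rightarrow> 'a"
  assumes "group G" "f \<in> carrier G \<rightarrow> carrier G" "f \<one> = \<one>"
    and f_mult: "\<And>g h. g \<in> carrier G \<Longrightarrow> h \<in> carrier G \<Longrightarrow>
      f (g \<otimes> f g \<otimes> h \<otimes> inv (f g)) \<in> group_center G #> (f g \<otimes> f h)"
  shows "group \<lparr>carrier = carrier G, monoid.mult = \<lambda>g h. g \<otimes> f g \<otimes> h \<otimes> inv (f g),
    monoid.one = \<one>\<rparr>"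
proof -
  interpret group G by fact
  define op where "op g h = g \<otimes> f g \<otimes> h \<otimes> inv (f g)" for g h
  have fc: "\<And>x. x \<in> carrier G \<Longrightarrow> f x \<in> carrier G" using assms(2) by blast
  have op_closed: "\<And>g h. g \<in> carrier G \<Longrightarrow> h \<in> carrier G \<Longrightarrow> op g h \<in> carrier G"
    by (simp add: op_def fc)
  have cancel: "\<And>a x. a \<in> carrier G \<Longrightarrow> x \<in> carrier G \<Longrightarrow> inv a \<otimes> (a \<otimes> x) = x"
      "\<And>a x. a \<in> carrier G \<Longrightarrow> x \<in> carrier G \<Longrightarrow> a \<otimes> (inv a \<otimes> x) = x"
    by (simp_all flip: m_assoc)
  have op_assoc: "op (op g h) k = op g (op h k)"
    if g: "g \<in> carrier G" and h: "h \<in> carrier G" and k: "k \<in> carrier G" for g h k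
  proof -
    obtain z where z: "z \<in> group_center G" and fz: "f (op g h) = z \<otimes> (f g \<otimes> f h)"
      using f_mult[OF g h] unfolding op_def r_coset_def by blast
    have "op (op g h) k = op g h \<otimes> (z \<otimes> (f g \<otimes> f h)) \<otimes> k \<otimes> inv (z \<otimes> (f g \<otimes> f h))"
      by (simp only: op_def[of "op g h"] fz)
    also have "\<dots> = op g h \<otimes> (f g \<otimes> f h) \<otimes> k \<otimes> inv (f g \<otimes> f h)"
      using z g h k fc op_closed by (simp add: conj_mult_center[OF assms(1)])
    also have "\<dots> = op g (op h k)"
      using g h k fc by (simp add: op_def m_assoc inv_mult_group cancel)
    finally show ?thesis .
  qed
  let ?M = "\<lparr>carrier = carrier G, monoid.mult = op, monoid.one = \<one>\<rparr>"
  have op_one: "op \<one> x = x" "op x \<one> = x" if "x \<in> carrier G" for x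
    using that fc by (simp_all add: op_def assms(3) m_assoc)
  interpret M: monoid ?M
    by (rule monoidI) (simp_all add: op_closed op_assoc op_one)
  have "group ?M"
  proof (rule M.group_r_invI)
    fix x assume "x \<in> carrier ?M"
    then have x: "x \<in> carrier G" by simp
    have "op x (inv (f x) \<otimes> inv x \<otimes> f x) = \<one>"
      using x fc by (simp add: op_def m_assoc cancel)
    then show "\<exists>y \<in> carrier ?M. x \<otimes>\<^bsub>?M\<^esub> y = \<one>\<^bsub>?M\<^esub>"
      using x fc by force
  qed
  then show ?thesis by (simp add: op_def[abs_def])
qed

theorem proposition3p2:
  fixes G :: "('a, 'b) monoid_scheme" and \<psi> :: "'a \<Rightarrow> 'a"
    and \<alpha> :: "(int \<times> ('a \<Rightarrow> 'a)) list"
  assumes "group G"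
    and "\<not> comm_group G"
    and "\<psi> \<in> hom G G"
    and "\<psi> ` commutator_subgroup G \<subseteq> group_center G"
    and "\<alpha> \<in> formal_exprs G"
  shows "\<exists>e. group \<lparr>carrier = carrier G, monoid.mult = circ_op G \<psi> \<alpha>, monoid.one = e\<rparr>"
proof -
  define f where "f x = \<psi> (expr_apply G \<alpha> x)" for x
  have circ_op_eq: "circ_op G \<psi> \<alpha> = (\<lambda>g h. g \<otimes>\<^bsub>G\<^esub> f g \<otimes>\<^bsub>G\<^esub> h \<otimes>\<^bsub>G\<^esub> inv\<^bsub>G\<^esub> (f g))"
    by (simp add: fun_eq_iff circ_op_def f_def)
  have f_closed: "f x \<in> carrier G" if "x \<in> carrier G" for x
    unfolding f_def using that by (intro hom_in_carrier[OF assms(3)] expr_apply_closed[OF assms(1,5)])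
  have f_one: "f \<one>\<^bsub>G\<^esub> = \<one>\<^bsub>G\<^esub>"
    using assms(1,3,5) by (simp add: f_def expr_apply_one hom_one)
  have f_mult: "f (g \<otimes>\<^bsub>G\<^esub> f g \<otimes>\<^bsub>G\<^esub> h \<otimes>\<^bsub>G\<^esub> inv\<^bsub>G\<^esub> (f g)) \<in> group_center G #>\<^bsub>G\<^esub> (f g \<otimes>\<^bsub>G\<^esub> f h)"
    if "g \<in> carrier G" "h \<in> carrier G" for g h
    using hom_expr_apply_conj_mod_center[OF assms(1,3,4,5) that(1) f_closed[OF that(1)] that(2)]
    by (simp only: f_def)
  have "group \<lparr>carrier = carrier G, monoid.mult = \<lambda>g h. g \<otimes>\<^bsub>G\<^esub> f g \<otimes>\<^bsub>G\<^esub> h \<otimes>\<^bsub>G\<^esub> inv\<^bsub>G\<^esub> (f g),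
      monoid.one = \<one>\<^bsub>G\<^esub>\<rparr>"
    using f_closed f_one f_mult by (intro twisted_mult_group[OF assms(1)]) auto
  then show ?thesis
    unfolding circ_op_eq by blast
qed

end
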